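(* For $\vec a\in\mathcal M$, let $g:T^*_{\vec a}\mathcal M\to T_{\vec a}\mathcal M$, $g(\vec\omega)=C_E(\vec\omega)$, and $(\vec\omega_1,\vec\omega_2)_g=\langle\vec\omega_1,g(\vec\omega_2)\rangle$. Then $(\,,)_g$ is symmetric, and for $\vec\omega_\nu=(\omega_\nu,\hat\omega_\nu)$, $(\vec\omega_1,\vec\omega_2)_g=\frac1{2\pi\mathrm i}\sum_{j=1}^m\oint_{\gamma_j}\big((\omega_1a'+\hat\omega_1\hat a')_+(a\omega_2+\hat a\hat\omega_2)_-+(\omega_2a'+\hat\omega_2\hat a')_+(a\omega_1+\hat a\hat\omega_1)_-\big)dz-\frac1{2\pi\mathrm i}\sum_{j=1}^m\oint_{\gamma_j}(\omega_1\omega_2aa'+\omega_1\hat\omega_2a\hat a'+\omega_2\hat\omega_1a\hat a'+\hat\omega_1\hat\omega_2\hat a\hat a')dz+\frac1{n_0}\frac1{(2\pi\mathrm i)^2}\Big(\sum_{j=1}^m\oint_{\gamma_j}(a'\omega_1+\hat a'\hat\omega_1)dz\Big)\Big(\sum_{j=1}^m\oint_{\gamma_j}(a'\omega_2+\hat a'\hat\omega_2)dz\Big)$.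
   Context: Fix $m\ge1$, positive integers $n_0,\dots,n_m$, nonzero integers $d_1,\dots,d_m$; $D_1,\dots,D_m\subset\mathbb C$ pairwise disjoint closed disks, $\gamma_i=\partial D_i$ positively oriented, $\mathbf D^{int}=\bigcup(D_i\setminus\gamma_i)$, $\mathbf D^{ext}=\mathbb P^1\setminus\bigcup D_i$; $\mathcal H$ = germs of functions holomorphic near $\bigcup\gamma_i$; $f=f_++f_-$, $f_+(z)=\frac1{2\pi\mathrm i}\sum_s\oint_{\gamma_s}\frac{f(p)}{p-z}dp$ ($z$ inside), $f_-=-(\text{same})$ ($z$ outside), $f_-(\infty)=0$. $\mathcal M$: pairs $\vec a=(a,\hat a)\in\mathcal H\times\mathcal H$, $a$ meromorphic on $\mathbf D^{ext}$, only pole $\infty$, $a=z^{n_0}+a_{n_0-2}z^{n_0-2}+\cdots$; $\hat a$ meromorphic on $\mathbf D^{int}$, only poles $\varphi_j\in D_j\setminus\gamma_j$, $\hat a=\hat a_{j,-n_j}(z-\varphi_j)^{-n_j}+\cdots$, $\hat a_{j,-n_j}\ne0$; $\zeta=a-\hat a=w_j^{d_j}$ on $\gamma_j$, $w_j$ holomorphic near $\gamma_j$, $w_j'\ne0$, $w_j(\gamma_j)$ winding once about $0$. Tangent vectors $X\leftrightarrow(\partial_Xa,\partial_X\hat a)$; $'=\partial_z$. $T^*_{\vec a}\mathcal M=(\mathcal H\times\mathcal H)/\ker\eta$ where $\eta(\omega,\hat\omega)=(a'(\omega+\hat\omega)_--(\omega a'+\hat\omega\hat a')_-,-\hat a'(\omega+\hat\omega)_++(\omega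 a'+\hat\omega\hat a')_+)$, with pairing $\langle(\omega,\hat\omega),X\rangle=\frac1{2\pi\mathrm i}\sum_s\oint_{\gamma_s}(\omega\partial_Xa+\hat\omega\partial_X\hat a)dz$. For $\vec\xi=(\xi,\hat\xi)\in T_{\vec a}\mathcal M$, $C_{\vec\xi}(\omega,\hat\omega)=(a'(\omega\xi+\hat\omega\hat\xi)_--\xi(\omega a'+\hat\omega\hat a')_-,\,-\hat a'(\omega\xi+\hat\omega\hat\xi)_++\hat\xi(\omega a'+\hat\omega\hat a')_+)$ (well defined on $T^*_{\vec a}\mathcal M$). $E$ is the Euler vector field, characterized by $\partial_E\vec a=(a-\frac z{n_0}a',\ \hat a-\frac z{n_0}\hat a')$. *)

theory Defs
  imports "HOL-Complex_Analysis.Complex_Analysis"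
begin

text \<open>Disk data: the disks are D_j = cball (c j) (r j), j = 1..m, with boundary
  circles gamma_j = circlepath (c j) (r j) (positively oriented).\<close>

definition cint :: "nat \<Rightarrow> (nat \<Rightarrow> complex) \<Rightarrow> (nat \<Rightarrow> real) \<Rightarrow> (complex \<Rightarrow> complex) \<Rightarrow> complex" where
  "cint m c r f = (1 / (2 * of_real pi * \<i>)) *
      (\<Sum>s = 1..m. contour_integral (circlepath (c s) (r s)) f)"

definition cauchy_int :: "nat \<Rightarrow> (nat \<Rightarrow> complex) \<Rightarrow> (nat \<Rightarrow> real) \<Rightarrow> (complex \<Rightarrow> complex) \<Rightarrow> complex \<Rightarrow> complex" where
  "cauchy_int m c r f z = cint m c r (\<lambda>p. f p / (p - z))"

definition int_disks :: "nat \<Rightarrow> (nat \<Rightarrow> complex) \<Rightarrow> (nat \<Rightarrow> real) \<Rightarrow> complex set" where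
  "int_disks m c r = (\<Union>j\<in>{1..m}. ball (c j) (r j))"

definition circles :: "nat \<Rightarrow> (nat \<Rightarrow> complex) \<Rightarrow> (nat \<Rightarrow> real) \<Rightarrow> complex set" where
  "circles m c r = (\<Union>j\<in>{1..m}. sphere (c j) (r j))"

text \<open>f_+ : the Cauchy integral inside the disks; on the circles its (continuous)
  boundary value from inside, i.e. the value of its holomorphic continuation;
  outside, the continuation f + Cauchy integral. f_- = f - f_+.\<close>
definition proj_plus :: "nat \<Rightarrow> (nat \<Rightarrow> complex) \<Rightarrow> (nat \<Rightarrow> real) \<Rightarrow> (complex \<Rightarrow> complex) \<Rightarrow> complex \<Rightarrow> complex" where
  "proj_plus m c r f z =
     (if z \<in> int_disks m c r then cauchy_int m c r f z
      else if z \<in> circles m c r then Lim (at z within int_disks m c r) (cauchy_int m c r f)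
      else f z + cauchy_int m c r f z)"

definition proj_minus :: "nat \<Rightarrow> (nat \<Rightarrow> complex) \<Rightarrow> (nat \<Rightarrow> real) \<Rightarrow> (complex \<Rightarrow> complex) \<Rightarrow> complex \<Rightarrow> complex" where
  "proj_minus m c r f z = f z - proj_plus m c r f z"

definition inH :: "nat \<Rightarrow> (nat \<Rightarrow> complex) \<Rightarrow> (nat \<Rightarrow> real) \<Rightarrow> (complex \<Rightarrow> complex) \<Rightarrow> bool" where
  "inH m c r f \<longleftrightarrow> (\<exists>U. open U \<and> circles m c r \<subseteq> U \<and> f holomorphic_on U)"

definition inM :: "nat \<Rightarrow> (nat \<Rightarrow> nat) \<Rightarrow> (nat \<Rightarrow> int) \<Rightarrow> (nat \<Rightarrow> complex) \<Rightarrow> (nat \<Rightarrow> real)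
     \<Rightarrow> (complex \<Rightarrow> complex) \<Rightarrow> (complex \<Rightarrow> complex) \<Rightarrow> bool" where
  "inM m n d c r a ah \<longleftrightarrow>
     \<comment> \<open>a holomorphic near the closure of D^ext in C, pole at infinity of the form z^n0 + a_{n0-2} z^{n0-2} + ...\<close>
     (\<exists>U. open U \<and> - int_disks m c r \<subseteq> U \<and> a holomorphic_on U) \<and>
     (\<exists>C R. \<forall>z. R \<le> norm z \<longrightarrow> norm (a z - z ^ n 0) \<le> C * norm z powr (real (n 0) - 2)) \<and>
     \<comment> \<open>ah meromorphic near the closed disks, with only poles phi_j of order exactly n_j\<close>
     (\<exists>\<phi> :: nat \<Rightarrow> complex.
        (\<forall>j\<in>{1..m}. \<phi> j \<in> ball (c j) (r j)) \<and>
        (\<exists>U. open U \<and> (\<Union>j\<in>{1..m}. cball (c j) (r j)) \<subseteq> U \<and> ah holomorphic_on (U - \<phi> ` {1..m})) \<and>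
        (\<forall>j\<in>{1..m}. is_pole ah (\<phi> j) \<and> zorder ah (\<phi> j) = - int (n j))) \<and>
     \<comment> \<open>zeta = a - ah = w_j^{d_j} on gamma_j\<close>
     (\<forall>j\<in>{1..m}. \<exists>V w. open V \<and> sphere (c j) (r j) \<subseteq> V \<and> w holomorphic_on V \<and>
        (\<forall>z\<in>V. deriv w z \<noteq> 0) \<and>
        (\<forall>z\<in>sphere (c j) (r j). w z \<noteq> 0 \<and> a z - ah z = w z powi d j) \<and>
        winding_number (w \<circ> circlepath (c j) (r j)) 0 = 1)"

definition Cop :: "nat \<Rightarrow> (nat \<Rightarrow> complex) \<Rightarrow> (nat \<Rightarrow> real) \<Rightarrow> (complex \<Rightarrow> complex) \<Rightarrow> (complex \<Rightarrow> complex)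
    \<Rightarrow> (complex \<Rightarrow> complex) \<times> (complex \<Rightarrow> complex) \<Rightarrow> (complex \<Rightarrow> complex) \<times> (complex \<Rightarrow> complex)
    \<Rightarrow> (complex \<Rightarrow> complex) \<times> (complex \<Rightarrow> complex)" where
  "Cop m c r a ah \<xi>v \<omega>v =
     (let \<xi> = fst \<xi>v; \<xi>h = snd \<xi>v; \<omega> = fst \<omega>v; \<omega>h = snd \<omega>v;
          P = (\<lambda>p. \<omega> p * \<xi> p + \<omega>h p * \<xi>h p);
          Q = (\<lambda>p. \<omega> p * deriv a p + \<omega>h p * deriv ah p)
      in (\<lambda>z. deriv a z * proj_minus m c r P z - \<xi> z * proj_minus m c r Q z,
          \<lambda>z. - deriv ah z * proj_plus m c r P z + \<xi>h z * proj_plus m c r Q z))"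

definition euler :: "nat \<Rightarrow> (complex \<Rightarrow> complex) \<Rightarrow> (complex \<Rightarrow> complex) \<Rightarrow> (complex \<Rightarrow> complex) \<times> (complex \<Rightarrow> complex)" where
  "euler n0 a ah = (\<lambda>z. a z - z / of_nat n0 * deriv a z, \<lambda>z. ah z - z / of_nat n0 * deriv ah z)"

definition pairing :: "nat \<Rightarrow> (nat \<Rightarrow> complex) \<Rightarrow> (nat \<Rightarrow> real)
    \<Rightarrow> (complex \<Rightarrow> complex) \<times> (complex \<Rightarrow> complex) \<Rightarrow> (complex \<Rightarrow> complex) \<times> (complex \<Rightarrow> complex) \<Rightarrow> complex" where
  "pairing m c r \<omega>v X = cint m c r (\<lambda>z. fst \<omega>v z * fst X z + snd \<omega>v z * snd X z)"

definition gform :: "nat \<Rightarrow> (nat \<Rightarrow> nat) \<Rightarrow> (nat \<Rightarrow> complex) \<Rightarrow> (nat \<Rightarrow> real) \<Rightarrow> (complex \<Rightarrow> complex) \<Rightarrow> (complex \<Rightarrow> complex)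
    \<Rightarrow> (complex \<Rightarrow> complex) \<times> (complex \<Rightarrow> complex) \<Rightarrow> (complex \<Rightarrow> complex) \<times> (complex \<Rightarrow> complex) \<Rightarrow> complex" where
  "gform m n c r a ah \<omega>1 \<omega>2 = pairing m c r \<omega>1 (Cop m c r a ah (euler (n 0) a ah) \<omega>2)"

end

theory Submission
  imports Defs
begin

text \<open>Near each circle \<open>\<gamma>\<^sub>j\<close>, the projections \<open>f\<^sub>+\<close> and \<open>f\<^sub>-\<close> are, up to the factor
  \<open>1/(2\<pi>i)\<close>, sums of Cauchy integrals of \<open>f\<close> over the other circles and over a concentric
  circle slightly outside (for \<open>f\<^sub>+\<close>) or inside (for \<open>f\<^sub>-\<close>) of \<open>\<gamma>\<^sub>j\<close>. Hence \<open>f\<^sub>+ g\<^sub>+\<close>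
  extends holomorphically into the disks and integrates to zero, and so does \<open>f\<^sub>- g\<^sub>-\<close>:
  it decays like \<open>1/z\<^sup>2\<close>, and the cross terms between different circles cancel by Fubini.
  Expanding \<open>\<langle>\<omega>\<^sub>1, C\<^sub>E \<omega>\<^sub>2\<rangle>\<close> with \<open>X = X\<^sub>+ + X\<^sub>-\<close> and \<open>(z Q)\<^sub>- = z Q\<^sub>- - \<ointegral>Q\<close>, everything
  except the claimed, manifestly symmetric, expression is of one of these two vanishing kinds.\<close>

section \<open>Cauchy integrals over a circle\<close>

definition cauchy_circle :: "complex \<Rightarrow> real \<Rightarrow> (complex \<Rightarrow> complex) \<Rightarrow> complex \<Rightarrow> complex" where
  "cauchy_circle c \<rho> f z = contour_integral (circlepath c \<rho>) (\<lambda>p. f p / (p - z))"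

lemma contour_integral_cmult: "contour_integral g (\<lambda>x. k * f x) = k * contour_integral g f"
  by (simp add: contour_integral_integral mult.assoc)

lemma has_contour_integral_cauchy_circle:
  assumes "continuous_on (sphere c \<rho>) f" "0 < \<rho>" "z \<notin> sphere c \<rho>"
  shows "((\<lambda>p. f p / (p - z)) has_contour_integral cauchy_circle c \<rho> f z) (circlepath c \<rho>)"
proof -
  have "continuous_on (sphere c \<rho>) (\<lambda>p. f p / (p - z))"
    using assms by (intro continuous_intros) auto
  then show ?thesis
    using assms unfolding cauchy_circle_def
    by (intro has_contour_integral_integral contour_integrable_continuous_circlepath)
      (simp add: path_image_circlepath_nonneg)
qed

lemma holomorphic_on_cauchy_circle:
  assumes "continuous_on (sphere c \<rho>) f" "0 < \<rho>"
  shows "cauchy_circle c \<rho> f holomorphic_on (- sphere c \<rho>)"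
proof -
  have "\<exists>f'. DERIV (cauchy_circle c \<rho> f) w :> f'" if w: "w \<notin> sphere c \<rho>" for w
  proof -
    have "(cauchy_circle c \<rho> f has_field_derivative
        (of_nat 1 * contour_integral (circlepath c \<rho>) (\<lambda>u. f u / (u - w) ^ Suc 1))) (at w)"
    proof (rule Cauchy_next_derivative(2)[where S="- sphere c \<rho>" and B="2 * pi * \<rho>"])
      show "continuous_on (path_image (circlepath c \<rho>)) f"
        using assms by (simp add: path_image_circlepath_nonneg)
      show "norm (vector_derivative (circlepath c \<rho>) (at t)) \<le> 2 * pi * \<rho>" for t
        using assms by (simp add: vector_derivative_circlepath norm_mult)
      show "((\<lambda>u. f u / (u - w') ^ 1) has_contour_integral cauchy_circle c \<rho> f w') (circlepath c \<rho>)"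
        if "w' \<in> - sphere c \<rho> - path_image (circlepath c \<rho>)" for w'
        using has_contour_integral_cauchy_circle[OF assms, of w'] that by simp
    qed (use w assms in \<open>auto simp: path_image_circlepath_nonneg\<close>)
    then show ?thesis by blast
  qed
  then show ?thesis
    by (subst holomorphic_on_open) auto
qed

lemma cauchy_circle_diff_cmult:
  assumes "continuous_on (sphere c \<rho>) F" "continuous_on (sphere c \<rho>) G" "0 < \<rho>" "z \<notin> sphere c \<rho>"
  shows "cauchy_circle c \<rho> (\<lambda>p. F p - k * G p) z = cauchy_circle c \<rho> F z - k * cauchy_circle c \<rho> G z"
proof -
  have "((\<lambda>p. F p / (p - z) - k * (G p / (p - z))) has_contour_integral
      cauchy_circle c \<rho> F z - k * cauchy_circle c \<rho> G z) (circlepath c \<rho>)"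
    using assms by (intro has_contour_integral_diff has_contour_integral_lmul has_contour_integral_cauchy_circle)
  then show ?thesis
    unfolding cauchy_circle_def by (simp add: diff_divide_distrib contour_integral_unique)
qed

lemma cauchy_circle_times_id:
  assumes "continuous_on (sphere c \<rho>) Q" "0 < \<rho>" "z \<notin> sphere c \<rho>"
  shows "cauchy_circle c \<rho> (\<lambda>p. p * Q p) z = contour_integral (circlepath c \<rho>) Q + z * cauchy_circle c \<rho> Q z"
proof -
  have "Q contour_integrable_on circlepath c \<rho>"
    using assms by (simp add: contour_integrable_continuous_circlepath path_image_circlepath_nonneg)
  then have "((\<lambda>p. Q p + z * (Q p / (p - z))) has_contour_integral
      contour_integral (circlepath c \<rho>) Q + z * cauchy_circle c \<rho> Q z) (circlepath c \<rho>)"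
    using assms by (intro has_contour_integral_add has_contour_integral_lmul has_contour_integral_cauchy_circle)
      (auto intro: has_contour_integral_integral)
  then have "((\<lambda>p. p * Q p / (p - z)) has_contour_integral
      contour_integral (circlepath c \<rho>) Q + z * cauchy_circle c \<rho> Q z) (circlepath c \<rho>)"
  proof (rule has_contour_integral_eq)
    fix p assume "p \<in> path_image (circlepath c \<rho>)"
    then have "p \<noteq> z" using assms by (auto simp: path_image_circlepath_nonneg)
    then show "Q p + z * (Q p / (p - z)) = p * Q p / (p - z)" by (simp add: field_simps)
  qed
  then show ?thesis
    unfolding cauchy_circle_def by (rule contour_integral_unique)
qed

lemma cauchy_circle_bound:
  assumes "continuous_on (sphere c \<rho>) f" "0 < \<rho>"
  obtains C where "0 \<le> C" "\<And>z. 2 * \<rho> \<le> norm (z - c) \<Longrightarrow> norm (cauchy_circle c \<rho> f z) \<le> C / norm (z - c)"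
proof -
  obtain B where B: "B > 0" "\<And>x. x \<in> sphere c \<rho> \<Longrightarrow> norm (f x) \<le> B"
    using compact_imp_bounded[OF compact_continuous_image[OF assms(1) compact_sphere]]
    unfolding bounded_pos by auto
  show ?thesis
  proof (rule that[of "4 * pi * B * \<rho>"])
    show "0 \<le> 4 * pi * B * \<rho>" using B assms by simp
    fix z assume z: "2 * \<rho> \<le> norm (z - c)"
    have "z \<notin> sphere c \<rho>" using z assms by (auto simp: dist_norm norm_minus_commute)
    then have "norm (cauchy_circle c \<rho> f z) \<le> (2 * B / norm (z - c)) * (2 * pi * \<rho>)"
    proof (rule has_contour_integral_bound_circlepath[OF has_contour_integral_cauchy_circle[OF assms]])
      fix x assume x: "norm (x - c) = \<rho>"
      have "norm (z - c) \<le> norm (x - z) + norm (x - c)"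
        using norm_triangle_ineq4[of "x - c" "x - z"] by simp
      then have "norm (z - c) / 2 \<le> norm (x - z)" using x z by linarith
      then have "norm (f x) / norm (x - z) \<le> B / (norm (z - c) / 2)"
        using B x z assms by (intro frac_le) (auto simp: dist_norm norm_minus_commute)
      then show "norm (f x / (x - z)) \<le> 2 * B / norm (z - c)"
        by (simp add: norm_divide mult.commute)
    qed (use B assms in auto)
    then show "norm (cauchy_circle c \<rho> f z) \<le> 4 * pi * B * \<rho> / norm (z - c)"
      by (simp add: ac_simps)
  qed
qed

lemma contour_integral_concentric_circlepaths_eq:
  assumes "open S" "g holomorphic_on S" "0 < \<rho>1" "0 < \<rho>2"
    and "\<And>\<rho>. min \<rho>1 \<rho>2 \<le> \<rho> \<Longrightarrow> \<rho> \<le> max \<rho>1 \<rho>2 \<Longrightarrow> sphere c \<rho> \<subseteq> S"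
  shows "contour_integral (circlepath c \<rho>1) g = contour_integral (circlepath c \<rho>2) g"
proof (rule Cauchy_theorem_homotopic_loops[OF _ assms(1,2)])
  show "homotopic_loops S (circlepath c \<rho>1) (circlepath c \<rho>2)"
  proof (rule homotopic_loops_linear)
    fix t :: real
    show "closed_segment (circlepath c \<rho>1 t) (circlepath c \<rho>2 t) \<subseteq> S"
    proof
      fix x assume "x \<in> closed_segment (circlepath c \<rho>1 t) (circlepath c \<rho>2 t)"
      then obtain u where u: "0 \<le> u" "u \<le> 1"
        and x: "x = (1 - u) *\<^sub>R circlepath c \<rho>1 t + u *\<^sub>R circlepath c \<rho>2 t"
        by (auto simp: closed_segment_def)
      define \<rho> where "\<rho> = (1 - u) * \<rho>1 + u * \<rho>2"
      have "(1 - u) * min \<rho>1 \<rho>2 \<le> (1 - u) * \<rho>1" "u * min \<rho>1 \<rho>2 \<le> u * \<rho>2"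
        "(1 - u) * \<rho>1 \<le> (1 - u) * max \<rho>1 \<rho>2" "u * \<rho>2 \<le> u * max \<rho>1 \<rho>2"
        using u by (intro mult_left_mono; simp)+
      then have "min \<rho>1 \<rho>2 \<le> \<rho>" "\<rho> \<le> max \<rho>1 \<rho>2"
        unfolding \<rho>_def by (simp_all add: algebra_simps)
      moreover have "x = c + of_real \<rho> * exp (2 * of_real pi * \<i> * of_real t)"
        unfolding x circlepath \<rho>_def by (simp add: scaleR_conv_of_real algebra_simps)
      then have "x \<in> sphere c \<rho>"
        using \<open>min \<rho>1 \<rho>2 \<le> \<rho>\<close> assms(3,4) by (simp add: dist_norm norm_mult norm_exp_eq_Re)
      ultimately show "x \<in> S" using assms(5) by blast
    qed
  qed auto
qed auto

lemma contour_integral_circlepath_eq_0_of_decay: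
  assumes h: "h holomorphic_on (- cball c a)" and "0 < \<rho>" "a < \<rho>" "0 \<le> C"
    and bound: "\<And>z. R \<le> norm (z - c) \<Longrightarrow> norm (h z) \<le> C / norm (z - c)^2"
  shows "contour_integral (circlepath c \<rho>) h = 0"
proof -
  define I where "I = contour_integral (circlepath c \<rho>) h"
  have key: "norm I * T \<le> 2 * pi * C" if T: "max \<rho> R \<le> T" for T
  proof -
    have "0 < T" using T assms by linarith
    have "I = contour_integral (circlepath c T) h"
      unfolding I_def
      by (rule contour_integral_concentric_circlepaths_eq[OF _ h]) (use T assms in auto)
    moreover have "h contour_integrable_on circlepath c T"
      using \<open>0 < T\<close> T assms
      by (intro contour_integrable_continuous_circlepath continuous_on_subset[OF holomorphic_on_imp_continuous_on[OF h]])
        auto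
    ultimately have "(h has_contour_integral I) (circlepath c T)"
      by (simp add: has_contour_integral_integral)
    then have "norm I \<le> C / T^2 * (2 * pi * T)"
      by (rule has_contour_integral_bound_circlepath) (use \<open>0 < T\<close> T assms bound in auto)
    also have "\<dots> = 2 * pi * C / T" using \<open>0 < T\<close> by (simp add: power2_eq_square)
    finally show ?thesis using \<open>0 < T\<close> by (simp add: field_simps)
  qed
  show ?thesis
  proof (rule ccontr)
    assume "contour_integral (circlepath c \<rho>) h \<noteq> 0"
    then have "0 < norm I" unfolding I_def by simp
    define T where "T = max (max \<rho> R) (2 * pi * C / norm I + 1)"
    have "norm I * (2 * pi * C / norm I + 1) \<le> norm I * T"
      unfolding T_def using \<open>0 < norm I\<close> by (intro mult_left_mono) auto
    moreover have "norm I * (2 * pi * C / norm I + 1) = 2 * pi * C + norm I"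
      using \<open>0 < norm I\<close> by (simp add: field_simps)
    moreover have "norm I * T \<le> 2 * pi * C"
      by (rule key) (simp add: T_def)
    ultimately show False using \<open>0 < norm I\<close> by linarith
  qed
qed

lemma contour_integral_cauchy_circle_swap:
  assumes f: "continuous_on (sphere c2 \<rho>2) f" and g: "continuous_on (sphere c1 \<rho>1) g"
    and "0 < \<rho>1" "0 < \<rho>2" and disj: "sphere c1 \<rho>1 \<inter> sphere c2 \<rho>2 = {}"
  shows "contour_integral (circlepath c1 \<rho>1) (\<lambda>w. cauchy_circle c2 \<rho>2 f w * g w)
       = - contour_integral (circlepath c2 \<rho>2) (\<lambda>z. f z * cauchy_circle c1 \<rho>1 g z)"
proof -
  have p1: "path_image (circlepath c1 \<rho>1) = sphere c1 \<rho>1"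
    and p2: "path_image (circlepath c2 \<rho>2) = sphere c2 \<rho>2"
    using assms by (simp_all add: path_image_circlepath_nonneg)
  define F where "F = (\<lambda>w z. f z * g w / (z - w))"
  have "continuous_on (path_image (circlepath c1 \<rho>1) \<times> path_image (circlepath c2 \<rho>2)) (\<lambda>(w, z). F w z)"
    unfolding p1 p2 F_def case_prod_beta using disj
    by (intro continuous_intros continuous_on_compose2[OF f] continuous_on_compose2[OF g]) auto
  then have "contour_integral (circlepath c1 \<rho>1) (\<lambda>w. contour_integral (circlepath c2 \<rho>2) (F w))
      = contour_integral (circlepath c2 \<rho>2) (\<lambda>z. contour_integral (circlepath c1 \<rho>1) (\<lambda>w. F w z))"
    by (rule contour_integral_swap) (simp_all add: vector_derivative_circlepath continuous_intros)
  also have "(\<lambda>z. contour_integral (circlepath c1 \<rho>1) (\<lambda>w. F w z))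
      = (\<lambda>z. - (f z * cauchy_circle c1 \<rho>1 g z))"
  proof
    fix z
    have Fz: "(\<lambda>w. F w z) = (\<lambda>w. - f z * (g w / (w - z)))"
      unfolding F_def by (simp add: minus_divide_right)
    show "contour_integral (circlepath c1 \<rho>1) (\<lambda>w. F w z) = - (f z * cauchy_circle c1 \<rho>1 g z)"
      unfolding Fz cauchy_circle_def contour_integral_cmult by simp
  qed
  also have "(\<lambda>w. contour_integral (circlepath c2 \<rho>2) (F w)) = (\<lambda>w. cauchy_circle c2 \<rho>2 f w * g w)"
  proof
    fix w
    have Fw: "F w = (\<lambda>z. g w * (f z / (z - w)))"
      unfolding F_def by (simp add: ac_simps)
    show "contour_integral (circlepath c2 \<rho>2) (F w) = cauchy_circle c2 \<rho>2 f w * g w"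
      unfolding Fw cauchy_circle_def contour_integral_cmult by simp
  qed
  finally show ?thesis by (simp add: contour_integral_neg)
qed

lemma sum_off_diagonal_antisym_eq_0:
  fixes A B :: "'a \<Rightarrow> 'a \<Rightarrow> 'b::ab_group_add"
  assumes "finite I" and antisym: "\<And>i j. i \<in> I \<Longrightarrow> j \<in> I \<Longrightarrow> i \<noteq> j \<Longrightarrow> B j i = - A i j"
  shows "(\<Sum>i\<in>I. \<Sum>j\<in>I - {i}. A i j + B i j) = 0"
proof -
  have "(\<Sum>i\<in>I. \<Sum>j\<in>I - {i}. B i j) = (\<Sum>j\<in>I. \<Sum>i\<in>I - {j}. B i j)"
    using sum.swap_restrict[OF assms(1) assms(1), of B "\<lambda>i j. i \<noteq> j"]
    by (simp add: set_diff_eq eq_commute[of _ "_ :: 'a"])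
  also have "\<dots> = (\<Sum>j\<in>I. \<Sum>i\<in>I - {j}. - A j i)"
    by (intro sum.cong refl) (use antisym in auto)
  finally show ?thesis by (simp add: sum.distrib sum_negf)
qed

section \<open>The Cauchy projections near the circles\<close>

lemma proj_plus_eq_diff: "proj_plus m c r f z = f z - proj_minus m c r f z"
  by (simp add: proj_minus_def)

definition inv_2pii :: complex where
  "inv_2pii = 1 / (2 * of_real pi * \<i>)"

definition paired_deriv :: "(complex \<Rightarrow> complex) \<Rightarrow> (complex \<Rightarrow> complex) \<Rightarrow> (complex \<Rightarrow> complex)
    \<Rightarrow> (complex \<Rightarrow> complex) \<Rightarrow> complex \<Rightarrow> complex" where
  "paired_deriv a ah \<omega> \<omega>h p = \<omega> p * deriv a p + \<omega>h p * deriv ah p"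

definition paired_value :: "(complex \<Rightarrow> complex) \<Rightarrow> (complex \<Rightarrow> complex) \<Rightarrow> (complex \<Rightarrow> complex)
    \<Rightarrow> (complex \<Rightarrow> complex) \<Rightarrow> complex \<Rightarrow> complex" where
  "paired_value a ah \<omega> \<omega>h p = a p * \<omega> p + ah p * \<omega>h p"

text \<open>\<open>U\<close> will be a common domain of holomorphy of all the data near the circles.\<close>
locale separated_circles =
  fixes m :: nat and c :: "nat \<Rightarrow> complex" and r :: "nat \<Rightarrow> real"
    and U :: "complex set" and \<delta> :: real
  assumes radius_pos: "\<And>j. j \<in> {1..m} \<Longrightarrow> 0 < r j"
    and margin_pos: "0 < \<delta>"
    and margin_less_radius: "\<And>j. j \<in> {1..m} \<Longrightarrow> \<delta> < r j"
    and open_U: "open U"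
    and annulus_subset_U:
      "\<And>j z. j \<in> {1..m} \<Longrightarrow> r j - \<delta> < dist (c j) z \<Longrightarrow> dist (c j) z < r j + \<delta> \<Longrightarrow> z \<in> U"
    and separated:
      "\<And>i j. i \<in> {1..m} \<Longrightarrow> j \<in> {1..m} \<Longrightarrow> i \<noteq> j \<Longrightarrow> r i + r j + 2 * \<delta> < dist (c i) (c j)"
begin

text \<open>On \<open>\<gamma>\<^sub>j\<close>, \<open>f\<^sub>+ = inv_2pii * (cauchy_others f j + cauchy_outer f j)\<close> and
  \<open>f\<^sub>- = - inv_2pii * (cauchy_others f j + cauchy_inner f j)\<close>, and the right-hand sides are
  holomorphic across \<open>\<gamma>\<^sub>j\<close>.\<close>
definition cauchy_others :: "(complex \<Rightarrow> complex) \<Rightarrow> nat \<Rightarrow> complex \<Rightarrow> complex" where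
  "cauchy_others f j z = (\<Sum>s\<in>{1..m} - {j}. cauchy_circle (c s) (r s) f z)"

definition cauchy_outer :: "(complex \<Rightarrow> complex) \<Rightarrow> nat \<Rightarrow> complex \<Rightarrow> complex" where
  "cauchy_outer f j = cauchy_circle (c j) (r j + \<delta> / 2) f"

definition cauchy_inner :: "(complex \<Rightarrow> complex) \<Rightarrow> nat \<Rightarrow> complex \<Rightarrow> complex" where
  "cauchy_inner f j = cauchy_circle (c j) (r j - \<delta> / 2) f"

lemma dist_center_other:
  assumes "j \<in> {1..m}" "s \<in> {1..m}" "s \<noteq> j" "dist (c j) z < r j + \<delta>"
  shows "r s + \<delta> < dist (c s) z"
  using separated[of s j] dist_triangle[of "c s" "c j" z] assms by (simp add: dist_commute)

lemma sphere_subset_U: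
  assumes "j \<in> {1..m}" "\<bar>\<rho> - r j\<bar> < \<delta>"
  shows "sphere (c j) \<rho> \<subseteq> U"
  using annulus_subset_U[OF assms(1)] assms(2) by auto

lemma near_radius_pos: "j \<in> {1..m} \<Longrightarrow> \<bar>\<rho> - r j\<bar> < \<delta> \<Longrightarrow> 0 < \<rho>"
  using margin_less_radius[of j] by linarith

lemma continuous_on_sphere_near:
  assumes "f holomorphic_on U" "j \<in> {1..m}" "\<bar>\<rho> - r j\<bar> < \<delta>"
  shows "continuous_on (sphere (c j) \<rho>) f"
  using assms sphere_subset_U holomorphic_on_imp_continuous_on holomorphic_on_subset by metis

lemma path_image_circle: "j \<in> {1..m} \<Longrightarrow> path_image (circlepath (c j) (r j)) = sphere (c j) (r j)"
  using radius_pos by (simp add: path_image_circlepath_nonneg less_imp_le)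

lemma holomorphic_on_cauchy_circle_other:
  assumes "f holomorphic_on U" "j \<in> {1..m}" "s \<in> {1..m}" "s \<noteq> j"
  shows "cauchy_circle (c s) (r s) f holomorphic_on ball (c j) (r j + \<delta>)"
proof (rule holomorphic_on_subset)
  show "cauchy_circle (c s) (r s) f holomorphic_on (- sphere (c s) (r s))"
    using assms margin_pos by (intro holomorphic_on_cauchy_circle continuous_on_sphere_near radius_pos) auto
  show "ball (c j) (r j + \<delta>) \<subseteq> - sphere (c s) (r s)"
    using dist_center_other[OF assms(2-4)] margin_pos by fastforce
qed

lemma holomorphic_on_cauchy_others:
  assumes "f holomorphic_on U" "j \<in> {1..m}"
  shows "cauchy_others f j holomorphic_on ball (c j) (r j + \<delta>)"
  unfolding cauchy_others_def[abs_def]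
  using holomorphic_on_cauchy_circle_other[OF assms] by (intro holomorphic_on_sum) auto

lemma holomorphic_on_cauchy_outer:
  assumes "f holomorphic_on U" "j \<in> {1..m}"
  shows "cauchy_outer f j holomorphic_on ball (c j) (r j + \<delta> / 2)"
proof (rule holomorphic_on_subset)
  show "cauchy_outer f j holomorphic_on (- sphere (c j) (r j + \<delta> / 2))"
    unfolding cauchy_outer_def using assms margin_pos
    by (intro holomorphic_on_cauchy_circle continuous_on_sphere_near near_radius_pos[OF assms(2)]) auto
qed auto

lemma holomorphic_on_cauchy_inner:
  assumes "f holomorphic_on U" "j \<in> {1..m}"
  shows "cauchy_inner f j holomorphic_on (- cball (c j) (r j - \<delta> / 2))"
proof (rule holomorphic_on_subset)
  show "cauchy_inner f j holomorphic_on (- sphere (c j) (r j - \<delta> / 2))"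
    unfolding cauchy_inner_def using assms margin_pos
    by (intro holomorphic_on_cauchy_circle continuous_on_sphere_near near_radius_pos[OF assms(2)]) auto
qed auto

lemma holomorphic_on_cauchy_others_outer:
  assumes "f holomorphic_on U" "j \<in> {1..m}"
  shows "(\<lambda>w. cauchy_others f j w + cauchy_outer f j w) holomorphic_on ball (c j) (r j + \<delta> / 2)"
proof -
  have "ball (c j) (r j + \<delta> / 2) \<subseteq> ball (c j) (r j + \<delta>)"
    using margin_pos by auto
  then show ?thesis
    using holomorphic_on_cauchy_others[OF assms] holomorphic_on_cauchy_outer[OF assms]
    by (intro holomorphic_intros) (auto intro: holomorphic_on_subset)
qed

lemma circle_subset_ball_outer: "sphere (c j) (r j) \<subseteq> ball (c j) (r j + \<delta> / 2)"
  using margin_pos by auto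

lemma int_disks_near_circle:
  assumes "j \<in> {1..m}" "z \<in> sphere (c j) (r j)" "w \<in> int_disks m c r" "dist w z < \<delta>"
  shows "w \<in> ball (c j) (r j)"
proof -
  obtain s where s: "s \<in> {1..m}" "w \<in> ball (c s) (r s)"
    using assms(3) unfolding int_disks_def by auto
  have "dist (c s) z \<le> dist (c s) w + dist w z"
    by (rule dist_triangle)
  then have "\<not> r s + \<delta> < dist (c s) z"
    using s assms(4) by auto
  then show ?thesis
    using s dist_center_other[OF assms(1) s(1)] assms(2) margin_pos by fastforce
qed

lemma circle_notin_int_disks:
  assumes "j \<in> {1..m}" "z \<in> sphere (c j) (r j)"
  shows "z \<notin> int_disks m c r"
  using int_disks_near_circle[OF assms, of z] assms margin_pos by auto

lemma cauchy_int_eq_circle_others: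
  assumes "j \<in> {1..m}"
  shows "cauchy_int m c r f w = inv_2pii * (cauchy_circle (c j) (r j) f w + cauchy_others f j w)"
  using assms
  by (simp add: cauchy_int_def cint_def inv_2pii_def cauchy_circle_def cauchy_others_def sum.remove)

lemma cauchy_circle_eq_outer:
  assumes "f holomorphic_on U" "j \<in> {1..m}" "w \<in> ball (c j) (r j)"
  shows "cauchy_circle (c j) (r j) f w = cauchy_outer f j w"
  unfolding cauchy_circle_def cauchy_outer_def
proof (rule contour_integral_concentric_circlepaths_eq)
  show "open (U - cball (c j) (dist (c j) w))"
    using open_U by auto
  show "(\<lambda>p. f p / (p - w)) holomorphic_on U - cball (c j) (dist (c j) w)"
    using assms(1) by (intro holomorphic_intros) (auto intro: holomorphic_on_subset)
  fix \<rho> assume "min (r j) (r j + \<delta> / 2) \<le> \<rho>" "\<rho> \<le> max (r j) (r j + \<delta> / 2)"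
  then show "sphere (c j) \<rho> \<subseteq> U - cball (c j) (dist (c j) w)"
    using sphere_subset_U[OF assms(2), of \<rho>] assms(3) margin_pos by auto
qed (use radius_pos[OF assms(2)] margin_pos in auto)

lemma proj_plus_on_circle:
  assumes "f holomorphic_on U" "j \<in> {1..m}" "z \<in> sphere (c j) (r j)"
  shows "proj_plus m c r f z = inv_2pii * (cauchy_others f j z + cauchy_outer f j z)"
proof -
  define K where "K = (\<lambda>w. inv_2pii * (cauchy_others f j w + cauchy_outer f j w))"
  have "K holomorphic_on ball (c j) (r j + \<delta> / 2)"
    unfolding K_def using holomorphic_on_cauchy_others_outer[OF assms(1,2)]
    by (rule holomorphic_on_mult[OF holomorphic_on_const])
  then have "isCont K z"
    using circle_subset_ball_outer assms(3) holomorphic_on_imp_continuous_on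
      continuous_on_eq_continuous_at[OF open_ball] by blast
  then have "(K \<longlongrightarrow> K z) (at z within int_disks m c r)"
    unfolding isCont_def by (rule tendsto_within_subset) auto
  moreover have "\<forall>\<^sub>F w in at z within int_disks m c r. K w = cauchy_int m c r f w"
    unfolding eventually_at
  proof (intro exI[of _ \<delta>] conjI ballI impI)
    fix w assume "w \<in> int_disks m c r" "w \<noteq> z \<and> dist w z < \<delta>"
    then have "w \<in> ball (c j) (r j)"
      using int_disks_near_circle assms by blast
    then show "K w = cauchy_int m c r f w"
      unfolding K_def cauchy_int_eq_circle_others[OF assms(2)]
        cauchy_circle_eq_outer[OF assms(1,2) \<open>w \<in> ball (c j) (r j)\<close>]
      by (simp add: algebra_simps)
  qed (rule margin_pos)
  ultimately have "(cauchy_int m c r f \<longlongrightarrow> K z) (at z within int_disks m c r)"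
    by (rule Lim_transform_eventually)
  moreover have "z islimpt ball (c j) (r j)"
    using assms radius_pos by (simp add: islimpt_ball)
  then have "z islimpt int_disks m c r"
    by (rule islimpt_subset) (use assms(2) in \<open>auto simp: int_disks_def\<close>)
  ultimately have "Lim (at z within int_disks m c r) (cauchy_int m c r f) = K z"
    by (intro tendsto_Lim) (simp_all add: trivial_limit_within)
  moreover have "z \<in> circles m c r"
    using assms(2,3) unfolding circles_def by auto
  ultimately show ?thesis
    unfolding proj_plus_def using circle_notin_int_disks[OF assms(2,3)] by (simp add: K_def)
qed

lemma cauchy_formula_annulus:
  assumes "f holomorphic_on U" "j \<in> {1..m}" "z \<in> sphere (c j) (r j)"
  shows "f z = inv_2pii * (cauchy_outer f j z - cauchy_inner f j z)"
proof -
  define \<rho>\<^sub>o \<rho>\<^sub>i where "\<rho>\<^sub>o = r j + \<delta> / 2" and "\<rho>\<^sub>i = r j - \<delta> / 2"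
  have radii: "0 < \<rho>\<^sub>i" "\<rho>\<^sub>i < \<rho>\<^sub>o" "\<bar>\<rho>\<^sub>o - r j\<bar> < \<delta>" "\<bar>\<rho>\<^sub>i - r j\<bar> < \<delta>"
    using margin_pos margin_less_radius[OF assms(2)] unfolding \<rho>\<^sub>o_def \<rho>\<^sub>i_def by auto
  have z: "z \<notin> sphere (c j) \<rho>\<^sub>o" "z \<notin> sphere (c j) \<rho>\<^sub>i" "dist (c j) z < \<rho>\<^sub>o" "\<rho>\<^sub>i < dist (c j) z"
    using assms(3) margin_pos unfolding \<rho>\<^sub>o_def \<rho>\<^sub>i_def by auto
  define g where "g = (\<lambda>p. if p = z then deriv f z else (f p - f z) / (p - z))"
  have "g holomorphic_on U"
    unfolding g_def by (rule pole_lemma_open[OF assms(1) open_U])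
  then have g_eq: "contour_integral (circlepath (c j) \<rho>\<^sub>o) g = contour_integral (circlepath (c j) \<rho>\<^sub>i) g"
    by (rule contour_integral_concentric_circlepaths_eq[OF open_U])
      (use radii sphere_subset_U[OF assms(2)] in \<open>auto simp: abs_le_iff\<close>)
  have "((\<lambda>p. 1 / (p - z)) has_contour_integral 2 * of_real pi * \<i>) (circlepath (c j) \<rho>\<^sub>o)"
    using Cauchy_integral_circlepath_simple[of "\<lambda>_. 1" "c j" \<rho>\<^sub>o z] z by (simp add: dist_norm norm_minus_commute)
  then have "((\<lambda>p. f p / (p - z) - f z * (1 / (p - z))) has_contour_integral
      cauchy_outer f j z - f z * (2 * of_real pi * \<i>)) (circlepath (c j) \<rho>\<^sub>o)"
    unfolding cauchy_outer_def \<rho>\<^sub>o_def[symmetric]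
    using assms radii z by (intro has_contour_integral_diff has_contour_integral_lmul
        has_contour_integral_cauchy_circle continuous_on_sphere_near) auto
  then have outer: "(g has_contour_integral cauchy_outer f j z - f z * (2 * of_real pi * \<i>)) (circlepath (c j) \<rho>\<^sub>o)"
    by (rule has_contour_integral_eq) (use z radii in \<open>auto simp: g_def diff_divide_distrib\<close>)
  have "((\<lambda>p. 1 / (p - z)) has_contour_integral 0) (circlepath (c j) \<rho>\<^sub>i)"
    by (rule Cauchy_theorem_convex_simple[of _ "ball (c j) (dist (c j) z)"])
      (use z radii in \<open>auto intro!: holomorphic_intros\<close>)
  then have "((\<lambda>p. f p / (p - z) - f z * (1 / (p - z))) has_contour_integral
      cauchy_inner f j z - f z * 0) (circlepath (c j) \<rho>\<^sub>i)"
    unfolding cauchy_inner_def \<rho>\<^sub>i_def[symmetric]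
    using assms radii z by (intro has_contour_integral_diff has_contour_integral_lmul
        has_contour_integral_cauchy_circle continuous_on_sphere_near) auto
  then have "((\<lambda>p. f p / (p - z) - f z * (1 / (p - z))) has_contour_integral
      cauchy_inner f j z) (circlepath (c j) \<rho>\<^sub>i)"
    by simp
  then have inner: "(g has_contour_integral cauchy_inner f j z) (circlepath (c j) \<rho>\<^sub>i)"
    by (rule has_contour_integral_eq) (use z radii in \<open>auto simp: g_def diff_divide_distrib\<close>)
  show ?thesis
    using g_eq contour_integral_unique[OF outer] contour_integral_unique[OF inner]
    by (simp add: inv_2pii_def field_simps)
qed

lemma proj_minus_on_circle:
  assumes "f holomorphic_on U" "j \<in> {1..m}" "z \<in> sphere (c j) (r j)"
  shows "proj_minus m c r f z = - inv_2pii * (cauchy_others f j z + cauchy_inner f j z)"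
  unfolding proj_minus_def proj_plus_on_circle[OF assms] cauchy_formula_annulus[OF assms]
  by (simp add: algebra_simps)

lemma continuous_on_circle:
  assumes "f holomorphic_on U" "j \<in> {1..m}"
  shows "continuous_on (sphere (c j) (r j)) f"
  using continuous_on_sphere_near[OF assms] margin_pos by simp

lemma contour_integrable_on_circle:
  assumes "continuous_on (sphere (c j) (r j)) F" "j \<in> {1..m}"
  shows "F contour_integrable_on circlepath (c j) (r j)"
  using assms path_image_circle by (simp add: contour_integrable_continuous_circlepath)

lemma circles_disjoint:
  assumes "j \<in> {1..m}" "s \<in> {1..m}" "s \<noteq> j"
  shows "sphere (c j) (r j) \<inter> sphere (c s) (r s) = {}"
proof -
  have "x \<notin> sphere (c s) (r s)" if "x \<in> sphere (c j) (r j)" for x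
    using dist_center_other[OF assms, of x] that margin_pos by auto
  then show ?thesis by blast
qed

lemma continuous_on_circle_cauchy_circle_other:
  assumes "f holomorphic_on U" "j \<in> {1..m}" "s \<in> {1..m}" "s \<noteq> j"
  shows "continuous_on (sphere (c j) (r j)) (cauchy_circle (c s) (r s) f)"
  by (rule continuous_on_subset[OF holomorphic_on_imp_continuous_on[OF holomorphic_on_cauchy_circle_other[OF assms]]])
    (use margin_pos in auto)

lemma continuous_on_circle_cauchy_others:
  assumes "f holomorphic_on U" "j \<in> {1..m}"
  shows "continuous_on (sphere (c j) (r j)) (cauchy_others f j)"
  by (rule continuous_on_subset[OF holomorphic_on_imp_continuous_on[OF holomorphic_on_cauchy_others[OF assms]]])
    (use margin_pos in auto)

lemma continuous_on_circle_cauchy_inner: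
  assumes "f holomorphic_on U" "j \<in> {1..m}"
  shows "continuous_on (sphere (c j) (r j)) (cauchy_inner f j)"
  by (rule continuous_on_subset[OF holomorphic_on_imp_continuous_on[OF holomorphic_on_cauchy_inner[OF assms]]])
    (use margin_pos in auto)

definition continuous_on_circles :: "(complex \<Rightarrow> complex) \<Rightarrow> bool" where
  "continuous_on_circles F \<longleftrightarrow> (\<forall>j\<in>{1..m}. continuous_on (sphere (c j) (r j)) F)"

lemma continuous_on_circles_arith:
  assumes "continuous_on_circles F" "continuous_on_circles G"
  shows "continuous_on_circles (\<lambda>z. F z + G z)" "continuous_on_circles (\<lambda>z. F z - G z)"
    "continuous_on_circles (\<lambda>z. F z * G z)"
  using assms unfolding continuous_on_circles_def by (auto intro: continuous_intros)

lemma continuous_on_circles_holomorphic: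
  "f holomorphic_on U \<Longrightarrow> continuous_on_circles f"
  unfolding continuous_on_circles_def using continuous_on_circle by blast

lemma continuous_on_circles_proj_plus:
  assumes "f holomorphic_on U"
  shows "continuous_on_circles (proj_plus m c r f)"
  unfolding continuous_on_circles_def
proof
  fix j assume j: "j \<in> {1..m}"
  have "continuous_on (sphere (c j) (r j)) (\<lambda>w. inv_2pii * (cauchy_others f j w + cauchy_outer f j w))"
    using holomorphic_on_cauchy_others_outer[OF assms j] circle_subset_ball_outer
    by (intro continuous_intros holomorphic_on_imp_continuous_on) (auto intro: holomorphic_on_subset)
  then show "continuous_on (sphere (c j) (r j)) (proj_plus m c r f)"
    by (rule continuous_on_eq) (use proj_plus_on_circle[OF assms j] in auto)
qed

lemma continuous_on_circles_proj_minus: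
  assumes "f holomorphic_on U"
  shows "continuous_on_circles (proj_minus m c r f)"
  using continuous_on_circles_arith(2)[OF continuous_on_circles_holomorphic continuous_on_circles_proj_plus, OF assms assms]
  by (simp add: proj_minus_def[abs_def])

lemma cint_add:
  "continuous_on_circles F \<Longrightarrow> continuous_on_circles G \<Longrightarrow> cint m c r (\<lambda>z. F z + G z) = cint m c r F + cint m c r G"
  unfolding cint_def continuous_on_circles_def
  by (simp add: contour_integral_add contour_integrable_on_circle sum.distrib distrib_left)

lemma cint_diff:
  "continuous_on_circles F \<Longrightarrow> continuous_on_circles G \<Longrightarrow> cint m c r (\<lambda>z. F z - G z) = cint m c r F - cint m c r G"
  unfolding cint_def continuous_on_circles_def
  by (simp add: contour_integral_diff contour_integrable_on_circle sum_subtractf right_diff_distrib)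

lemma cint_cmult: "cint m c r (\<lambda>z. k * F z) = k * cint m c r F"
  unfolding cint_def by (simp add: contour_integral_cmult sum_distrib_left)

lemma cint_cong:
  assumes "\<And>j z. j \<in> {1..m} \<Longrightarrow> z \<in> sphere (c j) (r j) \<Longrightarrow> F z = G z"
  shows "cint m c r F = cint m c r G"
  unfolding cint_def
proof (intro arg_cong[where f = "(*) _"] sum.cong refl contour_integral_eq)
  fix j z assume "j \<in> {1..m}" "z \<in> path_image (circlepath (c j) (r j))"
  then show "F z = G z"
    using assms path_image_circle by blast
qed

lemma cint_proj_plus_mult_eq_0:
  assumes "f holomorphic_on U" "g holomorphic_on U"
  shows "cint m c r (\<lambda>z. proj_plus m c r f z * proj_plus m c r g z) = 0"
proof -
  have "((\<lambda>z. proj_plus m c r f z * proj_plus m c r g z) has_contour_integral 0) (circlepath (c j) (r j))"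
    if j: "j \<in> {1..m}" for j
  proof -
    define K where "K h w = inv_2pii * (cauchy_others h j w + cauchy_outer h j w)" for h w
    have "K h holomorphic_on ball (c j) (r j + \<delta> / 2)" if "h holomorphic_on U" for h
      unfolding K_def using holomorphic_on_cauchy_others_outer[OF that j]
      by (rule holomorphic_on_mult[OF holomorphic_on_const])
    then have "((\<lambda>z. K f z * K g z) has_contour_integral 0) (circlepath (c j) (r j))"
      using assms circle_subset_ball_outer path_image_circle[OF j]
      by (intro Cauchy_theorem_convex_simple[of _ "ball (c j) (r j + \<delta> / 2)"] holomorphic_on_mult) auto
    then show ?thesis
    proof (rule has_contour_integral_eq)
      fix z assume "z \<in> path_image (circlepath (c j) (r j))"
      then have "z \<in> sphere (c j) (r j)"
        by (simp only: path_image_circle[OF j])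
      then show "K f z * K g z = proj_plus m c r f z * proj_plus m c r g z"
        using proj_plus_on_circle[OF assms(1) j] proj_plus_on_circle[OF assms(2) j] by (simp add: K_def)
    qed
  qed
  then have "(\<Sum>j=1..m. contour_integral (circlepath (c j) (r j))
      (\<lambda>z. proj_plus m c r f z * proj_plus m c r g z)) = 0"
    by (intro sum.neutral ballI contour_integral_unique)
  then show ?thesis
    unfolding cint_def by simp
qed

lemma contour_integral_cauchy_inner_mult_eq_0:
  assumes f: "f holomorphic_on U" and g: "g holomorphic_on U" and j: "j \<in> {1..m}"
  shows "contour_integral (circlepath (c j) (r j)) (\<lambda>z. cauchy_inner f j z * cauchy_inner g j z) = 0"
proof -
  define \<rho> where "\<rho> = r j - \<delta> / 2"
  have \<rho>: "0 < \<rho>" "\<rho> < r j" "\<bar>\<rho> - r j\<bar> < \<delta>"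
    unfolding \<rho>_def using margin_less_radius[OF j] margin_pos by auto
  obtain Cf where Cf: "0 \<le> Cf" "\<And>z. 2 * \<rho> \<le> norm (z - c j) \<Longrightarrow> norm (cauchy_inner f j z) \<le> Cf / norm (z - c j)"
    using cauchy_circle_bound[OF continuous_on_sphere_near[OF f j \<rho>(3)] \<rho>(1)]
    unfolding cauchy_inner_def \<rho>_def by blast
  obtain Cg where Cg: "0 \<le> Cg" "\<And>z. 2 * \<rho> \<le> norm (z - c j) \<Longrightarrow> norm (cauchy_inner g j z) \<le> Cg / norm (z - c j)"
    using cauchy_circle_bound[OF continuous_on_sphere_near[OF g j \<rho>(3)] \<rho>(1)]
    unfolding cauchy_inner_def \<rho>_def by blast
  show ?thesis
  proof (rule contour_integral_circlepath_eq_0_of_decay[where a = \<rho> and C = "Cf * Cg" and R = "2 * \<rho>"])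
    show "(\<lambda>z. cauchy_inner f j z * cauchy_inner g j z) holomorphic_on - cball (c j) \<rho>"
      unfolding \<rho>_def using holomorphic_on_cauchy_inner[OF f j] holomorphic_on_cauchy_inner[OF g j]
      by (rule holomorphic_on_mult)
    fix z assume "2 * \<rho> \<le> norm (z - c j)"
    then have "norm (cauchy_inner f j z) * norm (cauchy_inner g j z) \<le> (Cf / norm (z - c j)) * (Cg / norm (z - c j))"
      using Cf Cg by (intro mult_mono) auto
    then show "norm (cauchy_inner f j z * cauchy_inner g j z) \<le> Cf * Cg / norm (z - c j)^2"
      by (simp add: norm_mult power2_eq_square)
  qed (use \<rho> Cf Cg radius_pos[OF j] in auto)
qed

text \<open>Writing \<open>f = inv_2pii * (cauchy_outer f j - cauchy_inner f j)\<close>, the product \<open>f\<^sub>- g\<^sub>-\<close>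
  splits into a part holomorphic inside \<open>\<gamma>\<^sub>j\<close>, the product of the inner integrals, which decays
  like \<open>1/|z|\<^sup>2\<close>, and the cross terms between \<open>\<gamma>\<^sub>j\<close> and the other circles.\<close>
lemma contour_integral_proj_minus_mult:
  assumes f: "f holomorphic_on U" and g: "g holomorphic_on U" and j: "j \<in> {1..m}"
  shows "contour_integral (circlepath (c j) (r j)) (\<lambda>z. proj_minus m c r f z * proj_minus m c r g z)
     = - inv_2pii * contour_integral (circlepath (c j) (r j)) (\<lambda>z. cauchy_others f j z * g z + f z * cauchy_others g j z)"
proof -
  define H where "H z = cauchy_others f j z * cauchy_others g j z + cauchy_others f j z * cauchy_outer g j z
    + cauchy_outer f j z * cauchy_others g j z" for z
  define X where "X z = cauchy_others f j z * g z + f z * cauchy_others g j z" for z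
  define I where "I z = cauchy_inner f j z * cauchy_inner g j z" for z
  have "ball (c j) (r j + \<delta> / 2) \<subseteq> ball (c j) (r j + \<delta>)"
    using margin_pos by auto
  then have "H holomorphic_on ball (c j) (r j + \<delta> / 2)"
    unfolding H_def[abs_def]
    using holomorphic_on_cauchy_others[OF f j] holomorphic_on_cauchy_others[OF g j]
      holomorphic_on_cauchy_outer[OF f j] holomorphic_on_cauchy_outer[OF g j]
    by (intro holomorphic_intros) (auto intro: holomorphic_on_subset)
  then have H: "(H has_contour_integral 0) (circlepath (c j) (r j))"
    using circle_subset_ball_outer path_image_circle[OF j]
    by (intro Cauchy_theorem_convex_simple[of _ "ball (c j) (r j + \<delta> / 2)"]) auto
  have I: "(I has_contour_integral 0) (circlepath (c j) (r j))"
    using contour_integral_cauchy_inner_mult_eq_0[OF f g j] unfolding I_def[abs_def]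
    by (metis has_contour_integral_integral contour_integrable_on_circle[OF _ j] continuous_on_mult
        continuous_on_circle_cauchy_inner[OF f j] continuous_on_circle_cauchy_inner[OF g j])
  have X: "(X has_contour_integral contour_integral (circlepath (c j) (r j)) X) (circlepath (c j) (r j))"
    unfolding X_def[abs_def]
    using continuous_on_circle_cauchy_others[OF f j] continuous_on_circle_cauchy_others[OF g j]
      continuous_on_circle[OF f j] continuous_on_circle[OF g j]
    by (intro has_contour_integral_integral contour_integrable_on_circle[OF _ j] continuous_intros)
  have "((\<lambda>z. inv_2pii^2 * H z - inv_2pii * X z + inv_2pii^2 * I z) has_contour_integral
      - inv_2pii * contour_integral (circlepath (c j) (r j)) X) (circlepath (c j) (r j))"
    using has_contour_integral_add[OF has_contour_integral_diff
        [OF has_contour_integral_lmul[OF H] has_contour_integral_lmul[OF X]] has_contour_integral_lmul[OF I]]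
    by simp
  then have "((\<lambda>z. proj_minus m c r f z * proj_minus m c r g z) has_contour_integral
      - inv_2pii * contour_integral (circlepath (c j) (r j)) X) (circlepath (c j) (r j))"
  proof (rule has_contour_integral_eq)
    fix z assume "z \<in> path_image (circlepath (c j) (r j))"
    then have z: "z \<in> sphere (c j) (r j)" by (simp only: path_image_circle[OF j])
    show "inv_2pii^2 * H z - inv_2pii * X z + inv_2pii^2 * I z = proj_minus m c r f z * proj_minus m c r g z"
      unfolding proj_minus_on_circle[OF f j z] proj_minus_on_circle[OF g j z] H_def X_def I_def
        cauchy_formula_annulus[OF f j z] cauchy_formula_annulus[OF g j z]
      by (simp add: algebra_simps power2_eq_square)
  qed
  then show ?thesis
    unfolding X_def by (rule contour_integral_unique)
qed

lemma sum_contour_integral_cauchy_others_eq_0: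
  assumes f: "f holomorphic_on U" and g: "g holomorphic_on U"
  shows "(\<Sum>j\<in>{1..m}. contour_integral (circlepath (c j) (r j))
            (\<lambda>z. cauchy_others f j z * g z + f z * cauchy_others g j z)) = 0"
proof -
  define A where "A j s = contour_integral (circlepath (c j) (r j)) (\<lambda>z. cauchy_circle (c s) (r s) f z * g z)" for j s
  define B where "B j s = contour_integral (circlepath (c j) (r j)) (\<lambda>z. f z * cauchy_circle (c s) (r s) g z)" for j s
  have "contour_integral (circlepath (c j) (r j)) (\<lambda>z. cauchy_others f j z * g z + f z * cauchy_others g j z)
      = (\<Sum>s\<in>{1..m} - {j}. A j s + B j s)" if j: "j \<in> {1..m}" for j
  proof -
    have "((\<lambda>z. \<Sum>s\<in>{1..m} - {j}. cauchy_circle (c s) (r s) f z * g z + f z * cauchy_circle (c s) (r s) g z)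
        has_contour_integral (\<Sum>s\<in>{1..m} - {j}. A j s + B j s)) (circlepath (c j) (r j))"
      unfolding A_def B_def
      using continuous_on_circle_cauchy_circle_other[OF f j] continuous_on_circle_cauchy_circle_other[OF g j]
        continuous_on_circle[OF f j] continuous_on_circle[OF g j]
      by (intro has_contour_integral_sum has_contour_integral_add has_contour_integral_integral
          contour_integrable_on_circle[OF _ j] continuous_intros) auto
    then show ?thesis
      unfolding cauchy_others_def
      by (simp add: sum_distrib_left sum_distrib_right sum.distrib contour_integral_unique)
  qed
  moreover have "(\<Sum>j\<in>{1..m}. \<Sum>s\<in>{1..m} - {j}. A j s + B j s) = 0"
  proof (rule sum_off_diagonal_antisym_eq_0)
    fix j s assume "j \<in> {1..m}" "s \<in> {1..m}" "j \<noteq> s"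
    then show "B s j = - A j s"
      unfolding A_def B_def
      using contour_integral_cauchy_circle_swap[of "c s" "r s" f "c j" "r j" g]
        continuous_on_circle[OF f] continuous_on_circle[OF g] radius_pos circles_disjoint
      by auto
  qed simp
  ultimately show ?thesis
    by simp
qed

lemma cint_proj_minus_mult_eq_0:
  assumes "f holomorphic_on U" "g holomorphic_on U"
  shows "cint m c r (\<lambda>z. proj_minus m c r f z * proj_minus m c r g z) = 0"
  using sum_contour_integral_cauchy_others_eq_0[OF assms]
  by (simp add: cint_def contour_integral_proj_minus_mult[OF assms] sum_distrib_left[symmetric] sum_negf)

lemma proj_minus_diff_cmult:
  assumes F: "F holomorphic_on U" and G: "G holomorphic_on U"
    and j: "j \<in> {1..m}" and z: "z \<in> sphere (c j) (r j)"
  shows "proj_minus m c r (\<lambda>p. F p - k * G p) z = proj_minus m c r F z - k * proj_minus m c r G z"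
proof -
  have h: "(\<lambda>p. F p - k * G p) holomorphic_on U"
    using F G by (intro holomorphic_intros)
  have others: "cauchy_others (\<lambda>p. F p - k * G p) j z = cauchy_others F j z - k * cauchy_others G j z"
    unfolding cauchy_others_def sum_distrib_left sum_subtractf[symmetric]
    using F G j z circles_disjoint[OF j]
    by (intro sum.cong refl cauchy_circle_diff_cmult continuous_on_circle radius_pos) (auto simp: disjoint_iff)
  have inner: "cauchy_inner (\<lambda>p. F p - k * G p) j z = cauchy_inner F j z - k * cauchy_inner G j z"
    unfolding cauchy_inner_def using F G j z margin_pos
    by (intro cauchy_circle_diff_cmult continuous_on_sphere_near near_radius_pos[OF j]) auto
  show ?thesis
    unfolding proj_minus_on_circle[OF h j z] proj_minus_on_circle[OF F j z] proj_minus_on_circle[OF G j z]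
      others inner
    by (simp add: algebra_simps)
qed

text \<open>The constant \<open>cint m c r Q\<close> is the origin of the \<open>1/n\<^sub>0\<close> term of the formula.\<close>
lemma proj_minus_times_id:
  assumes Q: "Q holomorphic_on U" and j: "j \<in> {1..m}" and z: "z \<in> sphere (c j) (r j)"
  shows "proj_minus m c r (\<lambda>p. p * Q p) z = z * proj_minus m c r Q z - cint m c r Q"
proof -
  have h: "(\<lambda>p. p * Q p) holomorphic_on U"
    using Q by (intro holomorphic_intros)
  have others: "cauchy_others (\<lambda>p. p * Q p) j z
      = (\<Sum>s\<in>{1..m} - {j}. contour_integral (circlepath (c s) (r s)) Q) + z * cauchy_others Q j z"
    unfolding cauchy_others_def sum_distrib_left sum.distrib[symmetric]
    using Q j z circles_disjoint[OF j]
    by (intro sum.cong refl cauchy_circle_times_id continuous_on_circle radius_pos) (auto simp: disjoint_iff)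
  have inner: "cauchy_inner (\<lambda>p. p * Q p) j z
      = contour_integral (circlepath (c j) (r j - \<delta> / 2)) Q + z * cauchy_inner Q j z"
    unfolding cauchy_inner_def using Q j z margin_pos
    by (intro cauchy_circle_times_id continuous_on_sphere_near near_radius_pos[OF j]) auto
  have inner_radius: "contour_integral (circlepath (c j) (r j - \<delta> / 2)) Q = contour_integral (circlepath (c j) (r j)) Q"
    by (rule contour_integral_concentric_circlepaths_eq[OF open_U Q])
      (use radius_pos[OF j] margin_less_radius[OF j] margin_pos sphere_subset_U[OF j] in auto)
  have cint: "cint m c r Q = inv_2pii * (contour_integral (circlepath (c j) (r j)) Q
      + (\<Sum>s\<in>{1..m} - {j}. contour_integral (circlepath (c s) (r s)) Q))"
    unfolding cint_def inv_2pii_def using j by (simp add: sum.remove)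
  show ?thesis
    unfolding proj_minus_on_circle[OF h j z] proj_minus_on_circle[OF Q j z] others inner inner_radius cint
    by (simp add: algebra_simps)
qed

lemma proj_minus_euler_combination:
  fixes N :: nat
  assumes R: "R holomorphic_on U" and Q: "Q holomorphic_on U"
    and j: "j \<in> {1..m}" and z: "z \<in> sphere (c j) (r j)"
  shows "proj_minus m c r (\<lambda>p. R p - p * Q p / of_nat N) z
    = proj_minus m c r R z - (z * proj_minus m c r Q z - cint m c r Q) / of_nat N"
proof -
  have "(\<lambda>p. R p - p * Q p / of_nat N) = (\<lambda>p. R p - (1 / of_nat N) * (p * Q p))"
    by auto
  moreover have "(\<lambda>p. p * Q p) holomorphic_on U"
    using Q by (intro holomorphic_intros)
  ultimately show ?thesis
    by (simp only: proj_minus_diff_cmult[OF R _ j z] proj_minus_times_id[OF Q j z]) simp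
qed

text \<open>Split each factor as \<open>X = X\<^sub>+ + X\<^sub>-\<close>; the products of two \<open>+\<close> or two \<open>-\<close> parts
  integrate to zero.\<close>
lemma cint_mult_proj_minus_antisym:
  assumes Q1: "Q1 holomorphic_on U" and R1: "R1 holomorphic_on U"
    and Q2: "Q2 holomorphic_on U" and R2: "R2 holomorphic_on U"
  shows "cint m c r (\<lambda>z. Q1 z * proj_minus m c r R2 z - R1 z * proj_minus m c r Q2 z)
    = cint m c r (\<lambda>z. proj_plus m c r Q1 z * proj_minus m c r R2 z + proj_plus m c r Q2 z * proj_minus m c r R1 z)
      - cint m c r (\<lambda>z. R1 z * Q2 z)"
proof -
  let ?P = "proj_plus m c r" and ?M = "proj_minus m c r"
  have "(\<lambda>z. Q1 z * ?M R2 z - R1 z * ?M Q2 z)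
    = (\<lambda>z. ((?P Q1 z * ?M R2 z + ?P Q2 z * ?M R1 z) + ?M Q1 z * ?M R2 z + ?P Q2 z * ?P R1 z) - R1 z * Q2 z)"
    by (simp add: proj_minus_def algebra_simps)
  moreover have "continuous_on_circles (?P F)" "continuous_on_circles (?M F)" "continuous_on_circles F"
    if "F holomorphic_on U" for F
    using that continuous_on_circles_proj_plus continuous_on_circles_proj_minus continuous_on_circles_holomorphic
    by blast+
  ultimately show ?thesis
    using assms
    by (simp add: cint_add cint_diff continuous_on_circles_arith cint_proj_plus_mult_eq_0 cint_proj_minus_mult_eq_0)
qed

text \<open>The terms of the Euler field containing \<open>z\<close> cancel, except for the constant
  from \<open>proj_minus_times_id\<close>.\<close>
lemma pairing_Cop_euler_eq:
  fixes N :: nat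
  assumes a: "a holomorphic_on U" and ah: "ah holomorphic_on U"
    and \<omega>1: "\<omega>1 holomorphic_on U" and \<omega>1h: "\<omega>1h holomorphic_on U"
    and \<omega>2: "\<omega>2 holomorphic_on U" and \<omega>2h: "\<omega>2h holomorphic_on U"
  shows "pairing m c r (\<omega>1, \<omega>1h) (Cop m c r a ah (euler N a ah) (\<omega>2, \<omega>2h))
    = cint m c r (\<lambda>z. paired_deriv a ah \<omega>1 \<omega>1h z * proj_minus m c r (paired_value a ah \<omega>2 \<omega>2h) z
                     - paired_value a ah \<omega>1 \<omega>1h z * proj_minus m c r (paired_deriv a ah \<omega>2 \<omega>2h) z
                     + \<omega>1h z * \<omega>2 z * (ah z * deriv a z - a z * deriv ah z))
      + cint m c r (paired_deriv a ah \<omega>2 \<omega>2h) / of_nat N * cint m c r (paired_deriv a ah \<omega>1 \<omega>1h)"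
proof -
  define Q1 Q2 R1 R2 where "Q1 = paired_deriv a ah \<omega>1 \<omega>1h" and "Q2 = paired_deriv a ah \<omega>2 \<omega>2h"
    and "R1 = paired_value a ah \<omega>1 \<omega>1h" and "R2 = paired_value a ah \<omega>2 \<omega>2h"
  have "deriv a holomorphic_on U" "deriv ah holomorphic_on U"
    using a ah open_U by (auto intro: holomorphic_deriv)
  then have Q2: "Q2 holomorphic_on U" and R2: "R2 holomorphic_on U"
    unfolding Q2_def R2_def paired_deriv_def[abs_def] paired_value_def[abs_def]
    using a ah \<omega>2 \<omega>2h by (auto intro!: holomorphic_intros)
  have P2: "(\<lambda>p. \<omega>2 p * (a p - p / of_nat N * deriv a p) + \<omega>2h p * (ah p - p / of_nat N * deriv ah p))
    = (\<lambda>p. R2 p - p * Q2 p / of_nat N)"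
    by (auto simp: R2_def Q2_def paired_value_def paired_deriv_def algebra_simps add_divide_distrib)
  have Q2_eta: "(\<lambda>p. \<omega>2 p * deriv a p + \<omega>2h p * deriv ah p) = Q2"
    by (simp add: Q2_def paired_deriv_def[abs_def])
  have "pairing m c r (\<omega>1, \<omega>1h) (Cop m c r a ah (euler N a ah) (\<omega>2, \<omega>2h))
    = cint m c r (\<lambda>z. (Q1 z * proj_minus m c r R2 z - R1 z * proj_minus m c r Q2 z
        + \<omega>1h z * \<omega>2 z * (ah z * deriv a z - a z * deriv ah z)) + cint m c r Q2 / of_nat N * Q1 z)"
    unfolding pairing_def Cop_def euler_def Let_def fst_conv snd_conv P2 Q2_eta
    by (rule cint_cong)
      (simp only: proj_plus_eq_diff proj_minus_euler_combination[OF R2 Q2],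
        simp add: Q1_def R1_def R2_def Q2_def paired_deriv_def paired_value_def divide_inverse algebra_simps)
  also have "\<dots> = cint m c r (\<lambda>z. Q1 z * proj_minus m c r R2 z - R1 z * proj_minus m c r Q2 z
        + \<omega>1h z * \<omega>2 z * (ah z * deriv a z - a z * deriv ah z)) + cint m c r Q2 / of_nat N * cint m c r Q1"
  proof -
    have "Q1 holomorphic_on U" "R1 holomorphic_on U"
      "(\<lambda>z. \<omega>1h z * \<omega>2 z * (ah z * deriv a z - a z * deriv ah z)) holomorphic_on U"
      unfolding Q1_def R1_def paired_deriv_def[abs_def] paired_value_def[abs_def]
      using a ah \<omega>1 \<omega>1h \<omega>2 \<open>deriv a holomorphic_on U\<close> \<open>deriv ah holomorphic_on U\<close>
      by (auto intro!: holomorphic_intros)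
    then have "continuous_on_circles (\<lambda>z. Q1 z * proj_minus m c r R2 z - R1 z * proj_minus m c r Q2 z
        + \<omega>1h z * \<omega>2 z * (ah z * deriv a z - a z * deriv ah z))"
      "continuous_on_circles (\<lambda>z. cint m c r Q2 / of_nat N * Q1 z)"
      using Q2 R2
      by (simp_all add: continuous_on_circles_arith continuous_on_circles_holomorphic
          continuous_on_circles_proj_minus holomorphic_intros)
    then show ?thesis
      by (simp only: cint_add cint_cmult)
  qed
  finally show ?thesis
    unfolding Q1_def Q2_def R1_def R2_def .
qed

lemma pairing_Cop_euler:
  fixes N :: nat
  assumes a: "a holomorphic_on U" and ah: "ah holomorphic_on U"
    and \<omega>1: "\<omega>1 holomorphic_on U" and \<omega>1h: "\<omega>1h holomorphic_on U"
    and \<omega>2: "\<omega>2 holomorphic_on U" and \<omega>2h: "\<omega>2h holomorphic_on U"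
  shows "pairing m c r (\<omega>1, \<omega>1h) (Cop m c r a ah (euler N a ah) (\<omega>2, \<omega>2h)) =
        cint m c r (\<lambda>z.
            proj_plus m c r (\<lambda>p. \<omega>1 p * deriv a p + \<omega>1h p * deriv ah p) z
              * proj_minus m c r (\<lambda>p. a p * \<omega>2 p + ah p * \<omega>2h p) z
          + proj_plus m c r (\<lambda>p. \<omega>2 p * deriv a p + \<omega>2h p * deriv ah p) z
              * proj_minus m c r (\<lambda>p. a p * \<omega>1 p + ah p * \<omega>1h p) z)
      - cint m c r (\<lambda>z. \<omega>1 z * \<omega>2 z * a z * deriv a z + \<omega>1 z * \<omega>2h z * a z * deriv ah z
                        + \<omega>2 z * \<omega>1h z * a z * deriv ah z + \<omega>1h z * \<omega>2h z * ah z * deriv ah z)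
      + 1 / of_nat N * cint m c r (\<lambda>z. deriv a z * \<omega>1 z + deriv ah z * \<omega>1h z)
                         * cint m c r (\<lambda>z. deriv a z * \<omega>2 z + deriv ah z * \<omega>2h z)"
proof -
  define Q1 Q2 R1 R2 where "Q1 = paired_deriv a ah \<omega>1 \<omega>1h" and "Q2 = paired_deriv a ah \<omega>2 \<omega>2h"
    and "R1 = paired_value a ah \<omega>1 \<omega>1h" and "R2 = paired_value a ah \<omega>2 \<omega>2h"
  define W where "W z = \<omega>1h z * \<omega>2 z * (ah z * deriv a z - a z * deriv ah z)" for z
  have "deriv a holomorphic_on U" "deriv ah holomorphic_on U"
    using a ah open_U by (auto intro: holomorphic_deriv)
  then have holo: "Q1 holomorphic_on U" "R1 holomorphic_on U" "Q2 holomorphic_on U" "R2 holomorphic_on U"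
    "W holomorphic_on U"
    unfolding Q1_def Q2_def R1_def R2_def W_def[abs_def] paired_deriv_def[abs_def] paired_value_def[abs_def]
    using assms by (auto intro!: holomorphic_intros)
  have "pairing m c r (\<omega>1, \<omega>1h) (Cop m c r a ah (euler N a ah) (\<omega>2, \<omega>2h))
      = cint m c r (\<lambda>z. Q1 z * proj_minus m c r R2 z - R1 z * proj_minus m c r Q2 z + W z)
        + cint m c r Q2 / of_nat N * cint m c r Q1"
    using pairing_Cop_euler_eq[OF assms, of N] unfolding Q1_def Q2_def R1_def R2_def W_def .
  also have "cint m c r (\<lambda>z. Q1 z * proj_minus m c r R2 z - R1 z * proj_minus m c r Q2 z + W z)
      = cint m c r (\<lambda>z. proj_plus m c r Q1 z * proj_minus m c r R2 z + proj_plus m c r Q2 z * proj_minus m c r R1 z)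
        - cint m c r (\<lambda>z. R1 z * Q2 z - W z)"
    using holo cint_mult_proj_minus_antisym[OF holo(1-4)]
    by (simp add: cint_add cint_diff continuous_on_circles_arith continuous_on_circles_holomorphic
        continuous_on_circles_proj_minus)
  also have "(\<lambda>z. R1 z * Q2 z - W z)
      = (\<lambda>z. \<omega>1 z * \<omega>2 z * a z * deriv a z + \<omega>1 z * \<omega>2h z * a z * deriv ah z
              + \<omega>2 z * \<omega>1h z * a z * deriv ah z + \<omega>1h z * \<omega>2h z * ah z * deriv ah z)"
    by (auto simp: R1_def Q2_def W_def paired_deriv_def paired_value_def algebra_simps)
  finally have pairing_eq: "pairing m c r (\<omega>1, \<omega>1h) (Cop m c r a ah (euler N a ah) (\<omega>2, \<omega>2h))
      = cint m c r (\<lambda>z. proj_plus m c r Q1 z * proj_minus m c r R2 z + proj_plus m c r Q2 z * proj_minus m c r R1 z)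
        - cint m c r (\<lambda>z. \<omega>1 z * \<omega>2 z * a z * deriv a z + \<omega>1 z * \<omega>2h z * a z * deriv ah z
              + \<omega>2 z * \<omega>1h z * a z * deriv ah z + \<omega>1h z * \<omega>2h z * ah z * deriv ah z)
        + cint m c r Q2 / of_nat N * cint m c r Q1" .
  have "cint m c r Q1 = cint m c r (\<lambda>z. deriv a z * \<omega>1 z + deriv ah z * \<omega>1h z)"
    "cint m c r Q2 = cint m c r (\<lambda>z. deriv a z * \<omega>2 z + deriv ah z * \<omega>2h z)"
    by (simp_all add: Q1_def Q2_def paired_deriv_def[abs_def] mult.commute)
  then show ?thesis
    unfolding pairing_eq
    by (simp add: Q1_def Q2_def R1_def R2_def paired_deriv_def[abs_def] paired_value_def[abs_def] ac_simps)
qed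

lemma pairing_Cop_euler_commute:
  fixes N :: nat
  assumes "a holomorphic_on U" "ah holomorphic_on U" "\<omega>1 holomorphic_on U" "\<omega>1h holomorphic_on U"
    "\<omega>2 holomorphic_on U" "\<omega>2h holomorphic_on U"
  shows "pairing m c r (\<omega>1, \<omega>1h) (Cop m c r a ah (euler N a ah) (\<omega>2, \<omega>2h))
    = pairing m c r (\<omega>2, \<omega>2h) (Cop m c r a ah (euler N a ah) (\<omega>1, \<omega>1h))"
  unfolding pairing_Cop_euler[OF assms] pairing_Cop_euler[OF assms(1,2,5,6,3,4)]
  by (intro arg_cong2[where f = "(+)"] arg_cong2[where f = "(-)"] arg_cong[where f = "cint m c r"])
    (simp_all add: fun_eq_iff algebra_simps)

end

section \<open>Choosing a common neighbourhood of the circles\<close>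

lemma dist_gt_of_disjoint_cballs:
  fixes x y :: "'a::real_normed_vector"
  assumes "0 < r" "0 < s" "cball x r \<inter> cball y s = {}"
  shows "r + s < dist x y"
proof (rule ccontr)
  assume "\<not> r + s < dist x y"
  define t where "t = r / (r + s)"
  have t: "0 \<le> t" "t \<le> 1" "t * (r + s) = r" "(1 - t) * (r + s) = s"
    using assms unfolding t_def by (auto simp: field_simps)
  define p where "p = x + t *\<^sub>R (y - x)"
  have "x - p = (- t) *\<^sub>R (y - x)" "y - p = (1 - t) *\<^sub>R (y - x)"
    unfolding p_def by (simp_all add: algebra_simps)
  then have "dist x p = t * dist x y" "dist y p = (1 - t) * dist x y"
    using t by (simp_all add: dist_norm norm_minus_commute[of y x])
  moreover have "t * dist x y \<le> t * (r + s)" "(1 - t) * dist x y \<le> (1 - t) * (r + s)"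
    using t \<open>\<not> r + s < dist x y\<close> by (intro mult_left_mono; simp)+
  ultimately have "p \<in> cball x r" "p \<in> cball y s"
    using t by simp_all
  with assms(3) show False by blast
qed

lemma near_sphere_point:
  fixes c z :: "'a::real_normed_vector"
  assumes "e \<le> \<rho>" "\<rho> - e < dist c z" "dist c z < \<rho> + e"
  obtains y where "y \<in> sphere c \<rho>" "dist y z < e"
proof
  define t where "t = \<rho> / dist c z"
  have t: "0 \<le> t" "t * dist c z = \<rho>"
    using assms unfolding t_def by auto
  have "dist c (c + t *\<^sub>R (z - c)) = t * dist c z"
    using t by (simp add: dist_norm norm_minus_commute)
  then show "c + t *\<^sub>R (z - c) \<in> sphere c \<rho>"
    using t by simp
  have "dist (c + t *\<^sub>R (z - c)) z = norm ((1 - t) *\<^sub>R (z - c))"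
    by (simp add: dist_norm norm_minus_commute algebra_simps)
  also have "\<dots> = \<bar>(1 - t) * dist c z\<bar>"
    by (simp add: abs_mult dist_norm norm_minus_commute)
  also have "\<dots> < e"
    using t assms by (simp add: left_diff_distrib)
  finally show "dist (c + t *\<^sub>R (z - c)) z < e" .
qed

lemma circles_Int_int_disks:
  assumes disj: "\<forall>i\<in>{1..m}. \<forall>j\<in>{1..m}. i \<noteq> j \<longrightarrow> cball (c i) (r i) \<inter> cball (c j) (r j) = {}"
  shows "circles m c r \<inter> int_disks m c r = {}"
proof -
  have "z \<notin> ball (c s) (r s)" if "j \<in> {1..m}" "s \<in> {1..m}" "z \<in> sphere (c j) (r j)" for j s z
  proof (cases "s = j")
    case False
    then have "cball (c s) (r s) \<inter> cball (c j) (r j) = {}"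
      using that disj by blast
    then show ?thesis
      using that(3) ball_subset_cball[of "c s" "r s"] sphere_cball[of "c j" "r j"] by blast
  qed (use that in auto)
  then show ?thesis
    unfolding circles_def int_disks_def by blast
qed

lemma inM_imp_inH:
  assumes disj: "\<forall>i\<in>{1..m}. \<forall>j\<in>{1..m}. i \<noteq> j \<longrightarrow> cball (c i) (r i) \<inter> cball (c j) (r j) = {}"
    and "inM m n d c r a ah"
  shows "inH m c r a" "inH m c r ah"
proof -
  obtain Ua where "open Ua" "- int_disks m c r \<subseteq> Ua" "a holomorphic_on Ua"
    using assms(2) unfolding inM_def by (elim conjE exE)
  moreover have "circles m c r \<subseteq> - int_disks m c r"
    using circles_Int_int_disks[OF disj] by blast
  ultimately show "inH m c r a"
    unfolding inH_def by blast
  obtain \<phi> Uh where \<phi>: "\<forall>j\<in>{1..m}. \<phi> j \<in> ball (c j) (r j)"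
    and Uh: "open Uh" "(\<Union>j\<in>{1..m}. cball (c j) (r j)) \<subseteq> Uh" "ah holomorphic_on (Uh - \<phi> ` {1..m})"
    using assms(2) unfolding inM_def by (elim conjE exE)
  have "\<phi> ` {1..m} \<subseteq> int_disks m c r"
    using \<phi> unfolding int_disks_def by blast
  moreover have "circles m c r \<subseteq> Uh"
    using Uh(2) unfolding circles_def by fastforce
  ultimately have "circles m c r \<subseteq> Uh - \<phi> ` {1..m}"
    using circles_Int_int_disks[OF disj] by blast
  then show "inH m c r ah"
    unfolding inH_def using Uh by (intro exI[of _ "Uh - \<phi> ` {1..m}"]) (auto intro: finite_imp_closed)
qed

lemma inH_common_nbhd:
  assumes "finite F" "\<forall>f\<in>F. inH m c r f"
  obtains U where "open U" "circles m c r \<subseteq> U" "\<forall>f\<in>F. f holomorphic_on U"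
proof -
  obtain V where V: "\<forall>f\<in>F. open (V f) \<and> circles m c r \<subseteq> V f \<and> f holomorphic_on V f"
    using assms(2) unfolding inH_def by metis
  show ?thesis
    by (rule that[of "\<Inter>f\<in>F. V f"]) (use V assms(1) in \<open>auto intro: holomorphic_on_subset\<close>)
qed

lemma separated_circles_exists:
  assumes rpos: "\<forall>j\<in>{1..m}. 0 < r j"
    and disj: "\<forall>i\<in>{1..m}. \<forall>j\<in>{1..m}. i \<noteq> j \<longrightarrow> cball (c i) (r i) \<inter> cball (c j) (r j) = {}"
    and U: "open U" "circles m c r \<subseteq> U"
  obtains \<delta> where "separated_circles m c r U \<delta>"
proof -
  have "compact (circles m c r)"
    unfolding circles_def by (intro compact_UN) auto
  then obtain e where e: "0 < e" "(\<Union>y\<in>circles m c r. ball y e) \<subseteq> U"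
    using compact_subset_open_imp_ball_epsilon_subset U by blast
  have small: "\<forall>\<^sub>F \<delta> in at_right 0. \<delta> < b" if "0 < b" for b :: real
    using that by (intro eventually_at_rightI[where b = b]) auto
  have "\<forall>\<^sub>F \<delta> in at_right 0. r i + r j + 2 * \<delta> < dist (c i) (c j)"
    if "i \<in> {1..m}" "j \<in> {1..m} - {i}" for i j
  proof -
    have "r i + r j < dist (c i) (c j)"
      using that rpos disj by (intro dist_gt_of_disjoint_cballs) auto
    then show ?thesis
      using small[of "(dist (c i) (c j) - r i - r j) / 2"] by (auto elim: eventually_mono)
  qed
  then have ev: "\<forall>\<^sub>F \<delta> in at_right 0. 0 < \<delta> \<and> \<delta> < e \<and> (\<forall>j\<in>{1..m}. \<delta> < r j)
      \<and> (\<forall>i\<in>{1..m}. \<forall>j\<in>{1..m} - {i}. r i + r j + 2 * \<delta> < dist (c i) (c j))"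
    using e rpos
    by (intro eventually_conj eventually_at_right_less small eventually_ball_finite ballI) auto
  have "at_right (0::real) \<noteq> bot"
    using trivial_limit_at_right_real by (simp add: eventually_False)
  from eventually_happens'[OF this ev] obtain \<delta> where \<delta>: "0 < \<delta>" "\<delta> < e" "\<forall>j\<in>{1..m}. \<delta> < r j"
    "\<forall>i\<in>{1..m}. \<forall>j\<in>{1..m} - {i}. r i + r j + 2 * \<delta> < dist (c i) (c j)"
    by (elim exE conjE)
  show ?thesis
  proof (rule that, unfold_locales)
    fix j z assume j: "j \<in> {1..m}" and z: "r j - \<delta> < dist (c j) z" "dist (c j) z < r j + \<delta>"
    have "\<delta> \<le> r j"
      using \<delta>(3) j less_imp_le by blast
    then obtain y where y: "y \<in> sphere (c j) (r j)" "dist y z < \<delta>"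
      using z by (rule near_sphere_point)
    then have "y \<in> circles m c r" "z \<in> ball y e"
      using j \<delta>(2) unfolding circles_def by auto
    then show "z \<in> U"
      using e(2) by blast
  next
    fix i j assume "i \<in> {1..m}" "j \<in> {1..m}" "i \<noteq> j"
    then show "r i + r j + 2 * \<delta> < dist (c i) (c j)"
      using \<delta>(4) by blast
  qed (use rpos \<delta>(1,3) U(1) in auto)
qed

theorem proposition2p16:
  fixes m :: nat and n :: "nat \<Rightarrow> nat" and d :: "nat \<Rightarrow> int"
    and c :: "nat \<Rightarrow> complex" and r :: "nat \<Rightarrow> real"
    and a ah \<omega>1 \<omega>1h \<omega>2 \<omega>2h :: "complex \<Rightarrow> complex"
  assumes "m \<ge> 1"
    and "\<forall>i\<le>m. n i > 0"
    and "\<forall>j\<in>{1..m}. d j \<noteq> 0"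
    and "\<forall>j\<in>{1..m}. r j > 0"
    and "\<forall>i\<in>{1..m}. \<forall>j\<in>{1..m}. i \<noteq> j \<longrightarrow> cball (c i) (r i) \<inter> cball (c j) (r j) = {}"
    and "inM m n d c r a ah"
    and "inH m c r \<omega>1" and "inH m c r \<omega>1h" and "inH m c r \<omega>2" and "inH m c r \<omega>2h"
  shows "gform m n c r a ah (\<omega>1, \<omega>1h) (\<omega>2, \<omega>2h) = gform m n c r a ah (\<omega>2, \<omega>2h) (\<omega>1, \<omega>1h)
    \<and> gform m n c r a ah (\<omega>1, \<omega>1h) (\<omega>2, \<omega>2h) =
        cint m c r (\<lambda>z.
            proj_plus m c r (\<lambda>p. \<omega>1 p * deriv a p + \<omega>1h p * deriv ah p) z
              * proj_minus m c r (\<lambda>p. a p * \<omega>2 p + ah p * \<omega>2h p) z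
          + proj_plus m c r (\<lambda>p. \<omega>2 p * deriv a p + \<omega>2h p * deriv ah p) z
              * proj_minus m c r (\<lambda>p. a p * \<omega>1 p + ah p * \<omega>1h p) z)
      - cint m c r (\<lambda>z. \<omega>1 z * \<omega>2 z * a z * deriv a z + \<omega>1 z * \<omega>2h z * a z * deriv ah z
                        + \<omega>2 z * \<omega>1h z * a z * deriv ah z + \<omega>1h z * \<omega>2h z * ah z * deriv ah z)
      + 1 / of_nat (n 0) * cint m c r (\<lambda>z. deriv a z * \<omega>1 z + deriv ah z * \<omega>1h z)
                         * cint m c r (\<lambda>z. deriv a z * \<omega>2 z + deriv ah z * \<omega>2h z)"
proof -
  \<comment> \<open>Only the disjointness of the disks and holomorphy near the circles are used:
    \<open>pairing_Cop_euler\<close> holds for every \<open>N\<close>, even for \<open>N = 0\<close>, where \<open>1 / 0 = 0\<close>.\<close>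
  have "finite {a, ah, \<omega>1, \<omega>1h, \<omega>2, \<omega>2h}"
    by simp
  moreover have "\<forall>f\<in>{a, ah, \<omega>1, \<omega>1h, \<omega>2, \<omega>2h}. inH m c r f"
    using inM_imp_inH[OF assms(5,6)] assms(7-10) by blast
  ultimately obtain U where U: "open U" "circles m c r \<subseteq> U"
    and holo: "\<forall>f\<in>{a, ah, \<omega>1, \<omega>1h, \<omega>2, \<omega>2h}. f holomorphic_on U"
    by (rule inH_common_nbhd)
  obtain \<delta> where "separated_circles m c r U \<delta>"
    using separated_circles_exists[OF assms(4,5) U] .
  then interpret separated_circles m c r U \<delta> .
  show ?thesis
    unfolding gform_def
    by (intro conjI pairing_Cop_euler_commute pairing_Cop_euler) (use holo in simp_all)
qed
end
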